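(* Let $G$ act on the CAT(0) cube complex $X$ by automorphisms non-transversely, let $\gamma$ be a segment and $x_0$ a vertex of $X$. Then the map $\phi_\gamma:G\to\mathbb R$, $\phi_\gamma(g)=\omega_\gamma(x_0,gx_0)$, is a quasimorphism with defect $D(\phi_\gamma)=\sup_{g,h\in G}|\phi_\gamma(gh)-\phi_\gamma(g)-\phi_\gamma(h)|\le 6$. Consequently its homogenisation $\overline\phi_\gamma(g)=\lim_{n\to\infty}\phi_\gamma(g^n)/n$ is a homogeneous quasimorphism with defect at most $12$.
   Context: $\mathcal{H}(X)$ is the set of halfspaces of $X$, $\overline\Phi$ the complement of $\Phi$. Two halfspaces are nested if one of $\Phi\subseteq\Psi$, $\overline{\Phi}\subseteq\Psi$, $\Phi\subseteq\overline{\Psi}$, $\overline{\Phi}\subseteq\overline{\Psi}$ holds, transverse otherwise; the action is non-transverse if there are no $\Phi\in\mathcal H(X)$, $h\in G$ with $\Phi$ and $h\Phi$ transverse. $\Phi\supsetneq\Psi$ tightly means $\Phi\supsetneq\Psi$ and no halfspace $\Phi'$ satisfies $\Phi\supsetneq\Phi'\supsetneq\Psi$. For vertices $x,y$, $[x,y]=\{\Phi\in\mathcal H(X): x\notin\Phi,\ y\in\Phi\}$. A segment is a finite sequence $\gamma=(\Phi_0,\dots,\Phi_r)$, $r\ge0$, of halfspaces with $\Phi_i\supsetneq\Phi_{i+1}$ tightly; its reverse is $\overline\gamma=(\overline\Phi_r,\dots,\overline\Phi_0)$. Two segments overlap if some halfspace of one is equal or transverse to some halfspace of the other. A segment is in $[x,y]$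 if all its halfspaces lie in $[x,y]$. Copies of $\gamma$ are the segments $h\gamma$, $h\in G$. $c_\gamma(x,y)$ is the largest cardinality of a set of pairwise non-overlapping copies of $\gamma$ all lying in $[x,y]$, and $\omega_\gamma(x,y)=c_\gamma(x,y)-c_{\overline\gamma}(x,y)$. *)

theory Defs
  imports Complex_Main "HOL-Algebra.Group"
begin

text \<open>A CAT(0) cube complex is represented by its 1-skeleton, a median graph
  (Chepoi, Roller): vertices are the elements of the type 'v, edges given by E.\<close>

definition walk :: "('v \<Rightarrow> 'v \<Rightarrow> bool) \<Rightarrow> 'v list \<Rightarrow> bool" where
  "walk E p \<longleftrightarrow> p \<noteq> [] \<and> (\<forall>i. Suc i < length p \<longrightarrow> E (p ! i) (p ! Suc i))"

definition gdist :: "('v \<Rightarrow> 'v \<Rightarrow> bool) \<Rightarrow> 'v \<Rightarrow> 'v \<Rightarrow> nat" where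
  "gdist E x y = (LEAST n. \<exists>p. walk E p \<and> hd p = x \<and> last p = y \<and> length p = Suc n)"

definition interval :: "('v \<Rightarrow> 'v \<Rightarrow> bool) \<Rightarrow> 'v \<Rightarrow> 'v \<Rightarrow> 'v set" where
  "interval E x y = {z. gdist E x z + gdist E z y = gdist E x y}"

definition median_graph :: "('v \<Rightarrow> 'v \<Rightarrow> bool) \<Rightarrow> bool" where
  "median_graph E \<longleftrightarrow>
     (\<forall>x y. E x y \<longrightarrow> E y x) \<and> (\<forall>x. \<not> E x x) \<and>
     (\<forall>x y. \<exists>p. walk E p \<and> hd p = x \<and> last p = y) \<and>
     (\<forall>x y z. \<exists>!m. m \<in> interval E x y \<inter> interval E y z \<inter> interval E x z)"

definition gconvex :: "('v \<Rightarrow> 'v \<Rightarrow> bool) \<Rightarrow> 'v set \<Rightarrow> bool" where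
  "gconvex E C \<longleftrightarrow> (\<forall>x\<in>C. \<forall>y\<in>C. interval E x y \<subseteq> C)"

definition halfspaces :: "('v \<Rightarrow> 'v \<Rightarrow> bool) \<Rightarrow> 'v set set" where
  "halfspaces E = {H. H \<noteq> {} \<and> H \<noteq> UNIV \<and> gconvex E H \<and> gconvex E (- H)}"

definition nested :: "'v set \<Rightarrow> 'v set \<Rightarrow> bool" where
  "nested A B \<longleftrightarrow> A \<subseteq> B \<or> - A \<subseteq> B \<or> A \<subseteq> - B \<or> - A \<subseteq> - B"

definition transverse :: "'v set \<Rightarrow> 'v set \<Rightarrow> bool" where
  "transverse A B \<longleftrightarrow> \<not> nested A B"

definition tightly_contains :: "('v \<Rightarrow> 'v \<Rightarrow> bool) \<Rightarrow> 'v set \<Rightarrow> 'v set \<Rightarrow> bool" where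
  "tightly_contains E A B \<longleftrightarrow> B \<subset> A \<and> \<not> (\<exists>C\<in>halfspaces E. B \<subset> C \<and> C \<subset> A)"

definition segment :: "('v \<Rightarrow> 'v \<Rightarrow> bool) \<Rightarrow> 'v set list \<Rightarrow> bool" where
  "segment E s \<longleftrightarrow> s \<noteq> [] \<and> set s \<subseteq> halfspaces E \<and>
     (\<forall>i. Suc i < length s \<longrightarrow> tightly_contains E (s ! i) (s ! Suc i))"

definition rev_segment :: "'v set list \<Rightarrow> 'v set list" where
  "rev_segment s = rev (map uminus s)"

definition overlap :: "'v set list \<Rightarrow> 'v set list \<Rightarrow> bool" where
  "overlap s t \<longleftrightarrow> (\<exists>A\<in>set s. \<exists>B\<in>set t. A = B \<or> transverse A B)"

definition sep :: "('v \<Rightarrow> 'v \<Rightarrow> bool) \<Rightarrow> 'v \<Rightarrow> 'v \<Rightarrow> 'v set set" where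
  "sep E x y = {H \<in> halfspaces E. x \<notin> H \<and> y \<in> H}"

definition aut_action :: "('g, 'b) monoid_scheme \<Rightarrow> ('v \<Rightarrow> 'v \<Rightarrow> bool) \<Rightarrow> ('g \<Rightarrow> 'v \<Rightarrow> 'v) \<Rightarrow> bool" where
  "aut_action G E act \<longleftrightarrow> group G \<and>
     (\<forall>g\<in>carrier G. bij (act g) \<and> (\<forall>x y. E x y \<longleftrightarrow> E (act g x) (act g y))) \<and>
     act \<one>\<^bsub>G\<^esub> = id \<and>
     (\<forall>g\<in>carrier G. \<forall>h\<in>carrier G. act (g \<otimes>\<^bsub>G\<^esub> h) = act g \<circ> act h)"

definition non_transverse :: "('g, 'b) monoid_scheme \<Rightarrow> ('v \<Rightarrow> 'v \<Rightarrow> bool) \<Rightarrow> ('g \<Rightarrow> 'v \<Rightarrow> 'v) \<Rightarrow> bool" where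
  "non_transverse G E act \<longleftrightarrow>
     \<not> (\<exists>H\<in>halfspaces E. \<exists>h\<in>carrier G. transverse H (act h ` H))"

definition copy :: "('g \<Rightarrow> 'v \<Rightarrow> 'v) \<Rightarrow> 'g \<Rightarrow> 'v set list \<Rightarrow> 'v set list" where
  "copy act h s = map (\<lambda>H. act h ` H) s"

definition cnt :: "('g, 'b) monoid_scheme \<Rightarrow> ('v \<Rightarrow> 'v \<Rightarrow> bool) \<Rightarrow> ('g \<Rightarrow> 'v \<Rightarrow> 'v)
    \<Rightarrow> 'v set list \<Rightarrow> 'v \<Rightarrow> 'v \<Rightarrow> nat" where
  "cnt G E act s x y = Max {card S | S.
      S \<subseteq> {copy act h s | h. h \<in> carrier G} \<and>
      (\<forall>t\<in>S. set t \<subseteq> sep E x y) \<and>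
      (\<forall>t\<in>S. \<forall>u\<in>S. t \<noteq> u \<longrightarrow> \<not> overlap t u)}"

definition omega :: "('g, 'b) monoid_scheme \<Rightarrow> ('v \<Rightarrow> 'v \<Rightarrow> bool) \<Rightarrow> ('g \<Rightarrow> 'v \<Rightarrow> 'v)
    \<Rightarrow> 'v set list \<Rightarrow> 'v \<Rightarrow> 'v \<Rightarrow> int" where
  "omega G E act s x y = int (cnt G E act s x y) - int (cnt G E act (rev_segment s) x y)"

end

(*
  For m in the interval between a and b, a maximal family of pairwise non-overlapping copies of
  gamma in [a, b] consists of copies in [a, m], copies in [m, b] and at most one copy crossing m,
  since two crossing copies would violate tightness.  Conversely, maximal families in [a, m] and
  [m, b] merge into one in [a, b] after discarding at most one copy: by non-transversality the
  first halfspaces of any two copies are nested, so only one copy in [a, m] can fail to lie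
  above all copies in [m, b].  Hence c_gamma is additive up to 1 across medians, and applying
  this to the six ordered pairs of the triangle x0, g x0, gh x0 and its median bounds the defect
  of phi_gamma by 6.  Invariance of c_gamma under G and c_(reverse gamma)(x, y) = c_gamma(y, x)
  make phi_gamma antisymmetric.  The homogenisation of an antisymmetric quasimorphism exists by a
  Cauchy argument and at most doubles the defect, by Bavard's estimate for a^N b^N (ab)^-N.
*)

theory Submission
  imports Defs
begin

section \<open>Homogenisation of antisymmetric quasimorphisms\<close>

lemma nonpos_if_multiples_bounded:
  fixes x C :: real
  assumes "\<And>n::nat. n \<ge> 1 \<Longrightarrow> real n * x \<le> C"
  shows "x \<le> 0"
proof (rule ccontr)
  assume "\<not> x \<le> 0"
  then have x: "x > 0" by simp
  obtain n :: nat where n: "max C 0 / x < real n" using reals_Archimedean2 by blast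
  then have "n \<ge> 1" using x by (cases n) (auto simp: field_simps)
  moreover have "max C 0 < real n * x" using n x by (simp add: field_simps)
  ultimately show False using assms by fastforce
qed

lemma (in group) inv_mult_cancel:
  "x \<in> carrier G \<Longrightarrow> y \<in> carrier G \<Longrightarrow> inv x \<otimes> (x \<otimes> y) = y"
  by (simp add: m_assoc[symmetric])

lemma (in group) mult_inv_cancel:
  "x \<in> carrier G \<Longrightarrow> y \<in> carrier G \<Longrightarrow> x \<otimes> (inv x \<otimes> y) = y"
  by (simp add: m_assoc[symmetric])

locale antisymmetric_quasimorphism = group G for G (structure) +
  fixes \<phi> :: "'a \<Rightarrow> real" and D :: real
  assumes defect: "\<And>g h. g \<in> carrier G \<Longrightarrow> h \<in> carrier G \<Longrightarrow> \<bar>\<phi> (g \<otimes> h) - \<phi> g - \<phi> h\<bar> \<le> D"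
    and antisymmetric: "\<And>g. g \<in> carrier G \<Longrightarrow> \<phi> (inv g) = - \<phi> g"
begin

lemma phi_one: "\<phi> \<one> = 0"
  using antisymmetric[of \<one>] by simp

lemma defect_nonneg: "0 \<le> D"
  using defect[of \<one> \<one>] by (simp add: phi_one)

lemma pow_mult_defect:
  assumes g: "g \<in> carrier G"
  shows "\<bar>\<phi> (g [^] (m * n)) - real m * \<phi> (g [^] n)\<bar> \<le> real m * D"
proof (induction m)
  case 0
  then show ?case by (simp add: phi_one)
next
  case (Suc m)
  have "g [^] (Suc m * n) = g [^] (m * n) \<otimes> g [^] n"
    using g by (simp add: nat_pow_mult add.commute)
  moreover have "\<bar>\<phi> (g [^] (m * n) \<otimes> g [^] n) - \<phi> (g [^] (m * n)) - \<phi> (g [^] n)\<bar> \<le> D"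
    using g by (intro defect) auto
  ultimately show ?case using Suc by (simp add: algebra_simps)
qed

lemma pow_quotient_mult_close:
  assumes g: "g \<in> carrier G" and m: "m \<ge> 1" and n: "n \<ge> 1"
  shows "\<bar>\<phi> (g [^] (m * n)) / real (m * n) - \<phi> (g [^] n) / real n\<bar> \<le> D / real n"
proof -
  have "\<phi> (g [^] (m * n)) / real (m * n) - \<phi> (g [^] n) / real n
      = (\<phi> (g [^] (m * n)) - real m * \<phi> (g [^] n)) / (real m * real n)"
    using m n by (simp add: field_simps)
  also have "\<bar>\<dots>\<bar> = \<bar>\<phi> (g [^] (m * n)) - real m * \<phi> (g [^] n)\<bar> / (real m * real n)"
    by (simp add: abs_divide)
  also have "\<dots> \<le> real m * D / (real m * real n)"
    by (rule divide_right_mono[OF pow_mult_defect[OF g]]) simp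
  also have "\<dots> = D / real n"
    using m by simp
  finally show ?thesis .
qed

lemma pow_quotients_close:
  assumes g: "g \<in> carrier G" and m: "m \<ge> 1" and n: "n \<ge> 1"
  shows "\<bar>\<phi> (g [^] m) / real m - \<phi> (g [^] n) / real n\<bar> \<le> D / real m + D / real n"
  using pow_quotient_mult_close[OF g m n] pow_quotient_mult_close[OF g n m]
  by (simp add: mult.commute)

lemma pow_quotients_Cauchy:
  assumes g: "g \<in> carrier G"
  shows "Cauchy (\<lambda>n. \<phi> (g [^] n) / real n)"
proof (rule metric_CauchyI)
  fix e :: real
  assume e: "e > 0"
  obtain M :: nat where "max (2 * D / e) 1 < real M"
    using reals_Archimedean2 by blast
  then have M: "2 * D / e < real M" "M \<ge> 1"
    by auto
  have "\<bar>\<phi> (g [^] m) / real m - \<phi> (g [^] n) / real n\<bar> < e" if "m \<ge> M" "n \<ge> M" for m n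
  proof -
    have "D / real m \<le> D / real M" "D / real n \<le> D / real M"
      using that M(2) defect_nonneg by (auto intro!: divide_left_mono)
    moreover have "D / real M < e / 2"
      using M e by (simp add: field_simps)
    moreover have "\<bar>\<phi> (g [^] m) / real m - \<phi> (g [^] n) / real n\<bar> \<le> D / real m + D / real n"
      using pow_quotients_close[OF g, of m n] that M(2) by simp
    ultimately show ?thesis
      by linarith
  qed
  then show "\<exists>M. \<forall>m\<ge>M. \<forall>n\<ge>M. dist (\<phi> (g [^] m) / real m) (\<phi> (g [^] n) / real n) < e"
    by (auto simp: dist_real_def)
qed

definition homogenization :: "'a \<Rightarrow> real" where
  "homogenization g = lim (\<lambda>n. \<phi> (g [^] n) / real n)"

lemma homogenization_LIMSEQ:
  "g \<in> carrier G \<Longrightarrow> (\<lambda>n. \<phi> (g [^] n) / real n) \<longlonglongrightarrow> homogenization g"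
  unfolding homogenization_def
  using pow_quotients_Cauchy Cauchy_convergent_iff convergent_LIMSEQ_iff by blast

lemma homogenization_approx:
  assumes g: "g \<in> carrier G"
  shows "\<bar>real n * homogenization g - \<phi> (g [^] n)\<bar> \<le> D"
proof (cases "n = 0")
  case True
  then show ?thesis using defect_nonneg by (simp add: phi_one)
next
  case False
  let ?q = "\<lambda>n. \<phi> (g [^] n) / real n"
  have "(\<lambda>m. \<bar>?q m - ?q n\<bar>) \<longlonglongrightarrow> \<bar>homogenization g - ?q n\<bar>"
    by (intro tendsto_intros homogenization_LIMSEQ[OF g])
  moreover have "(\<lambda>m. D / real m + D / real n) \<longlonglongrightarrow> 0 + D / real n"
    by (intro tendsto_intros tendsto_divide_0[OF tendsto_const] filterlim_real_sequentially)
  moreover have "\<forall>m\<ge>1. \<bar>?q m - ?q n\<bar> \<le> D / real m + D / real n"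
    using pow_quotients_close[OF g] False by simp
  ultimately have "\<bar>homogenization g - ?q n\<bar> \<le> D / real n"
    by (intro LIMSEQ_le) auto
  then have "real n * \<bar>homogenization g - ?q n\<bar> \<le> D"
    using False by (simp add: field_simps)
  moreover have "real n * homogenization g - \<phi> (g [^] n) = real n * (homogenization g - ?q n)"
    using False by (simp add: field_simps)
  ultimately show ?thesis
    by (simp add: abs_mult)
qed

lemma homogenization_pow_nat:
  assumes g: "g \<in> carrier G"
  shows "homogenization (g [^] (n::nat)) = real n * homogenization g"
proof -
  have "real k * \<bar>homogenization (g [^] n) - real n * homogenization g\<bar> \<le> 2 * D" for k :: nat
  proof -
    have "(g [^] n) [^] k = g [^] (n * k)"
      using g by (simp add: nat_pow_pow)
    then have "\<bar>real k * homogenization (g [^] n) - real k * (real n * homogenization g)\<bar> \<le> 2 * D"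
      using homogenization_approx[of "g [^] n" k] homogenization_approx[OF g, of "n * k"] g
      by (simp add: algebra_simps)
    then show ?thesis
      by (metis abs_mult abs_of_nat right_diff_distrib)
  qed
  then have "\<bar>homogenization (g [^] n) - real n * homogenization g\<bar> \<le> 0"
    by (intro nonpos_if_multiples_bounded[of _ "2 * D"])
  then show ?thesis by simp
qed

lemma homogenization_inv:
  assumes g: "g \<in> carrier G"
  shows "homogenization (inv g) = - homogenization g"
proof -
  have "(\<lambda>n. \<phi> (inv g [^] n) / real n) = (\<lambda>n. - (\<phi> (g [^] n) / real n))"
    using g by (simp add: nat_pow_inv antisymmetric)
  moreover have "(\<lambda>n. - (\<phi> (g [^] n) / real n)) \<longlonglongrightarrow> - homogenization g"
    by (intro tendsto_intros homogenization_LIMSEQ[OF g])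
  ultimately show ?thesis
    unfolding homogenization_def[of "inv g"] by (simp add: limI)
qed

lemma homogenization_pow_int:
  assumes g: "g \<in> carrier G"
  shows "homogenization (g [^] (n::int)) = real_of_int n * homogenization g"
proof (cases "n < 0")
  case True
  then have "homogenization (g [^] n) = - homogenization (g [^] nat (- n))"
    using g int_pow_def2[of G g n] by (simp add: homogenization_inv)
  also have "\<dots> = real_of_int n * homogenization g"
    using True homogenization_pow_nat[OF g, of "nat (- n)"] by simp
  finally show ?thesis .
next
  case False
  then have "homogenization (g [^] n) = homogenization (g [^] nat n)"
    using int_pow_def2[of G g n] by simp
  also have "\<dots> = real_of_int n * homogenization g"
    using False homogenization_pow_nat[OF g, of "nat n"] by simp
  finally show ?thesis .
qed

lemma commutator_bound:
  assumes u: "u \<in> carrier G" and v: "v \<in> carrier G"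
  shows "\<bar>\<phi> (u \<otimes> v \<otimes> inv u \<otimes> inv v)\<bar> \<le> 3 * D"
proof -
  have "u \<otimes> v \<otimes> inv u \<otimes> inv v = (u \<otimes> v) \<otimes> inv (v \<otimes> u)"
    using u v by (simp add: inv_mult_group m_assoc)
  moreover have "\<bar>\<phi> ((u \<otimes> v) \<otimes> inv (v \<otimes> u)) - \<phi> (u \<otimes> v) - \<phi> (inv (v \<otimes> u))\<bar> \<le> D"
    using u v by (intro defect) auto
  moreover have "\<bar>\<phi> (u \<otimes> v) - \<phi> u - \<phi> v\<bar> \<le> D" "\<bar>\<phi> (v \<otimes> u) - \<phi> v - \<phi> u\<bar> \<le> D"
    using u v by (auto intro: defect)
  ultimately show ?thesis
    using u v antisymmetric[of "v \<otimes> u"] by auto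
qed

lemma pow_product_word_step:
  fixes N :: nat
  assumes a: "a \<in> carrier G" and b: "b \<in> carrier G"
  defines "u \<equiv> a [^] N \<otimes> a \<otimes> a \<otimes> b \<otimes> inv (a [^] N)"
    and "v \<equiv> a [^] N \<otimes> b [^] N \<otimes> inv a \<otimes> inv (a [^] N)"
  shows "a [^] Suc (Suc N) \<otimes> b [^] Suc (Suc N) \<otimes> inv ((a \<otimes> b) [^] Suc (Suc N))
       = (u \<otimes> v \<otimes> inv u \<otimes> inv v) \<otimes> (a [^] N \<otimes> b [^] N \<otimes> inv ((a \<otimes> b) [^] N))"
proof -
  have "b [^] Suc (Suc N) = b \<otimes> b [^] N \<otimes> b"
    using b nat_pow_Suc2[OF b, of N] by (simp add: m_assoc)
  then show ?thesis
    unfolding u_def v_def using a b by (simp add: m_assoc inv_mult_group inv_mult_cancel mult_inv_cancel)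
qed

text \<open>Each step from \<open>N\<close> to \<open>N + 2\<close> costs one commutator (\<open>3 D\<close>) and one product (\<open>D\<close>).\<close>

lemma pow_product_word_bound:
  assumes a: "a \<in> carrier G" and b: "b \<in> carrier G"
  shows "\<bar>\<phi> (a [^] N \<otimes> b [^] N \<otimes> inv ((a \<otimes> b) [^] N))\<bar> \<le> 2 * real N * D"
proof (induction N rule: nat_less_induct)
  case (1 N)
  consider "N = 0" | "N = 1" | K where "N = Suc (Suc K)"
    by (metis One_nat_def not0_implies_Suc)
  then show ?case
  proof cases
    case 3
    define w where "w = a [^] K \<otimes> b [^] K \<otimes> inv ((a \<otimes> b) [^] K)"
    define u where "u = a [^] K \<otimes> a \<otimes> a \<otimes> b \<otimes> inv (a [^] K)"
    define v where "v = a [^] K \<otimes> b [^] K \<otimes> inv a \<otimes> inv (a [^] K)"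
    have carrier: "u \<in> carrier G" "v \<in> carrier G" "w \<in> carrier G"
      using a b by (auto simp: u_def v_def w_def)
    have "\<bar>\<phi> ((u \<otimes> v \<otimes> inv u \<otimes> inv v) \<otimes> w) - \<phi> (u \<otimes> v \<otimes> inv u \<otimes> inv v) - \<phi> w\<bar> \<le> D"
      using carrier by (intro defect) auto
    moreover have "\<bar>\<phi> (u \<otimes> v \<otimes> inv u \<otimes> inv v)\<bar> \<le> 3 * D"
      using carrier by (intro commutator_bound)
    moreover have "\<bar>\<phi> w\<bar> \<le> 2 * real K * D"
      using 1 3 unfolding w_def by simp
    ultimately show ?thesis
      using 3 pow_product_word_step[OF a b, of K] defect_nonneg
      unfolding u_def v_def w_def by (simp add: algebra_simps)
  qed (use a b defect_nonneg in \<open>simp_all add: phi_one\<close>)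
qed

lemma homogenization_defect:
  assumes a: "a \<in> carrier G" and b: "b \<in> carrier G"
  shows "\<bar>homogenization (a \<otimes> b) - homogenization a - homogenization b\<bar> \<le> 2 * D"
proof -
  let ?d = "homogenization (a \<otimes> b) - homogenization a - homogenization b"
  have "real N * (\<bar>?d\<bar> - 2 * D) \<le> 5 * D" if "N \<ge> 1" for N
  proof -
    define w where "w = a [^] N \<otimes> b [^] N \<otimes> inv ((a \<otimes> b) [^] N)"
    have w: "w \<in> carrier G" and split: "a [^] N \<otimes> b [^] N = w \<otimes> (a \<otimes> b) [^] N"
      using a b by (simp_all add: w_def m_assoc)
    have "\<bar>\<phi> (w \<otimes> (a \<otimes> b) [^] N) - \<phi> w - \<phi> ((a \<otimes> b) [^] N)\<bar> \<le> D"
      "\<bar>\<phi> (a [^] N \<otimes> b [^] N) - \<phi> (a [^] N) - \<phi> (b [^] N)\<bar> \<le> D"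
      using a b w by (auto intro: defect)
    moreover have "\<bar>\<phi> w\<bar> \<le> 2 * real N * D"
      unfolding w_def using a b by (rule pow_product_word_bound)
    moreover have "\<bar>real N * homogenization a - \<phi> (a [^] N)\<bar> \<le> D"
      "\<bar>real N * homogenization b - \<phi> (b [^] N)\<bar> \<le> D"
      "\<bar>real N * homogenization (a \<otimes> b) - \<phi> ((a \<otimes> b) [^] N)\<bar> \<le> D"
      using a b by (auto intro: homogenization_approx)
    ultimately have "\<bar>real N * ?d\<bar> \<le> 2 * real N * D + 5 * D"
      unfolding split by (simp add: algebra_simps)
    then have "real N * \<bar>?d\<bar> \<le> 2 * real N * D + 5 * D"
      by (simp only: abs_mult abs_of_nat)
    then show ?thesis
      by (simp add: algebra_simps)
  qed
  then have "\<bar>?d\<bar> - 2 * D \<le> 0"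
    by (rule nonpos_if_multiples_bounded)
  then show ?thesis by simp
qed

end

section \<open>Median graphs\<close>

lemma nat_discrete_ivt: "\<not> P (0::nat) \<Longrightarrow> P n \<Longrightarrow> \<exists>i<n. \<not> P i \<and> P (Suc i)"
  by (induction n) (auto intro: less_SucI)

lemma halfspace_Compl: "H \<in> halfspaces E \<Longrightarrow> - H \<in> halfspaces E"
  by (auto simp: halfspaces_def)

lemma halfspace_interval:
  "H \<in> halfspaces E \<Longrightarrow> m \<in> interval E a b \<Longrightarrow> a \<in> H \<Longrightarrow> b \<in> H \<Longrightarrow> m \<in> H"
  unfolding halfspaces_def gconvex_def by blast

lemma walk_rev:
  assumes p: "walk E p" and sym: "\<And>x y. E x y \<Longrightarrow> E y x"
  shows "walk E (rev p)"
  unfolding walk_def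
proof (intro conjI allI impI)
  show "rev p \<noteq> []"
    using p by (simp add: walk_def)
  fix i assume i: "Suc i < length (rev p)"
  define j where "j = length p - Suc (Suc i)"
  have j: "Suc j < length p" "length p - Suc i = Suc j"
    using i by (auto simp: j_def)
  then have "E (p ! Suc j) (p ! j)"
    using p sym by (simp add: walk_def)
  then show "E (rev p ! i) (rev p ! Suc i)"
    using i j by (simp add: rev_nth j_def)
qed

lemma sep_interval_left:
  assumes m: "m \<in> interval E a b" and H: "H \<in> sep E a m"
  shows "H \<in> sep E a b"
  using H halfspace_interval[OF halfspace_Compl m, of H] by (auto simp: sep_def)

lemma sep_interval_right:
  assumes m: "m \<in> interval E a b" and H: "H \<in> sep E m b"
  shows "H \<in> sep E a b"
  using H halfspace_interval[OF _ m, of H] by (auto simp: sep_def)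

locale cube_complex =
  fixes E :: "'v \<Rightarrow> 'v \<Rightarrow> bool"
  assumes median: "median_graph E"
begin

lemma edge_sym: "E x y \<Longrightarrow> E y x"
  using median by (auto simp: median_graph_def)

lemma edge_irrefl: "\<not> E x x"
  using median by (auto simp: median_graph_def)

lemma connected: "\<exists>p. walk E p \<and> hd p = x \<and> last p = y"
  using median by (auto simp: median_graph_def)

lemma median_exists: "\<exists>m. m \<in> interval E x y \<and> m \<in> interval E y z \<and> m \<in> interval E x z"
  using median unfolding median_graph_def by blast

lemma gdist_le_walk:
  "walk E p \<Longrightarrow> hd p = x \<Longrightarrow> last p = y \<Longrightarrow> length p = Suc n \<Longrightarrow> gdist E x y \<le> n"
  unfolding gdist_def by (rule Least_le) blast

lemma geodesic_exists: "\<exists>p. walk E p \<and> hd p = x \<and> last p = y \<and> length p = Suc (gdist E x y)"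
proof -
  obtain p where p: "walk E p" "hd p = x" "last p = y"
    using connected by blast
  then have "length p = Suc (length p - 1)"
    by (simp add: walk_def)
  with p have "\<exists>n p. walk E p \<and> hd p = x \<and> last p = y \<and> length p = Suc n"
    by blast
  then show ?thesis
    unfolding gdist_def by (rule LeastI_ex)
qed

lemma gdist_eq_0D: "gdist E x y = 0 \<Longrightarrow> x = y"
  using geodesic_exists[of x y] by (auto simp: length_Suc_conv)

lemma gdist_sym: "gdist E x y = gdist E y x"
proof -
  have "gdist E y x \<le> gdist E x y" for x y
  proof -
    obtain p where "walk E p" "hd p = x" "last p = y" "length p = Suc (gdist E x y)"
      using geodesic_exists by blast
    then show ?thesis
      using walk_rev[of E p] edge_sym
      by (intro gdist_le_walk[of "rev p"]) (auto simp: walk_def hd_rev last_rev)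
  qed
  then show ?thesis
    by (simp add: order_antisym)
qed

lemma interval_sym: "interval E x y = interval E y x"
  unfolding interval_def by (auto simp: gdist_sym)

lemma gdist_edge: "E a b \<Longrightarrow> gdist E a b = 1"
proof -
  assume e: "E a b"
  then have "walk E [a, b]"
    by (auto simp: walk_def less_Suc_eq)
  then have "gdist E a b \<le> 1"
    using gdist_le_walk[of "[a, b]" a b 1] by simp
  moreover have "gdist E a b \<noteq> 0"
    using e edge_irrefl gdist_eq_0D by blast
  ultimately show ?thesis by simp
qed

lemma interval_edge:
  assumes "E a b" and "z \<in> interval E a b"
  shows "z = a \<or> z = b"
proof -
  have "gdist E a z + gdist E z b = 1"
    using assms by (simp add: interval_def gdist_edge)
  then have "gdist E a z = 0 \<or> gdist E z b = 0"
    by arith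
  then show ?thesis
    using gdist_eq_0D by auto
qed

lemma halfspace_crossed_by_edge:
  assumes H: "H \<in> halfspaces E" and e: "E a b" and a: "a \<notin> H" and b: "b \<in> H"
  shows "H = {z. gdist E b z < gdist E a z}"
proof -
  have conv: "gconvex E H" "gconvex E (- H)"
    using H by (auto simp: halfspaces_def)
  have "z \<in> H \<longleftrightarrow> gdist E b z < gdist E a z" for z
  proof -
    obtain m where m: "m \<in> interval E a b" "m \<in> interval E b z" "m \<in> interval E a z"
      using median_exists by blast
    have "m = a \<or> m = b"
      using interval_edge[OF e m(1)] .
    moreover have "m \<noteq> a" if "z \<in> H"
      using conv(1) m(2) a b that unfolding gconvex_def by blast
    moreover have "m \<noteq> b" if "z \<notin> H"
      using conv(2) m(3) a b that unfolding gconvex_def by blast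
    ultimately show ?thesis
      using m(2,3) gdist_edge[OF e] gdist_edge[OF edge_sym[OF e]]
      by (auto simp: interval_def gdist_sym)
  qed
  then show ?thesis by blast
qed

lemma finite_sep: "finite (sep E x y)"
proof -
  obtain p where p: "walk E p" "hd p = x" "last p = y"
    using connected by blast
  have ne: "p \<noteq> []"
    using p by (simp add: walk_def)
  let ?crossing = "\<lambda>i. {z. gdist E (p ! Suc i) z < gdist E (p ! i) z}"
  have "sep E x y \<subseteq> ?crossing ` {..<length p}"
  proof
    fix H assume H: "H \<in> sep E x y"
    then have "p ! 0 \<notin> H" "p ! (length p - 1) \<in> H"
      using p ne by (auto simp: sep_def hd_conv_nth last_conv_nth)
    then obtain i where i: "i < length p - 1" "p ! i \<notin> H" "p ! Suc i \<in> H"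
      using nat_discrete_ivt[of "\<lambda>i. p ! i \<in> H"] by blast
    moreover have "E (p ! i) (p ! Suc i)"
      using p(1) i(1) by (simp add: walk_def)
    ultimately have "H = ?crossing i"
      using halfspace_crossed_by_edge H by (simp add: sep_def)
    then show "H \<in> ?crossing ` {..<length p}"
      using i(1) by auto
  qed
  then show ?thesis
    using finite_surj by blast
qed

end

section \<open>Segments and overlaps\<close>

lemma nested_sym: "nested A B \<Longrightarrow> nested B A"
  unfolding nested_def by auto

lemma nested_Compl: "nested A B \<Longrightarrow> nested (- A) (- B)"
  unfolding nested_def by blast

lemma overlap_sym: "overlap t u \<Longrightarrow> overlap u t"
  unfolding overlap_def transverse_def using nested_sym by blast

lemma not_overlapD:
  assumes "\<not> overlap t u" "A \<in> set t" "B \<in> set u"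
  shows "A \<noteq> B" and "nested A B"
  using assms unfolding overlap_def transverse_def by auto

lemma nested_comparable:
  assumes "nested X Y" "u \<notin> X" "u \<notin> Y" "v \<in> X" "v \<in> Y"
  shows "X \<subseteq> Y \<or> Y \<subseteq> X"
  using assms unfolding nested_def by blast

lemma sep_nested_comparable:
  "nested X Y \<Longrightarrow> X \<in> sep E a b \<Longrightarrow> Y \<in> sep E a b \<Longrightarrow> X \<subseteq> Y \<or> Y \<subseteq> X"
  using nested_comparable[of X Y a b] unfolding sep_def by blast

lemma segment_nonempty: "segment E t \<Longrightarrow> t \<noteq> []"
  by (simp add: segment_def)

lemma segment_tight:
  assumes "segment E t" "Suc i < length t" "C \<in> halfspaces E" "t ! Suc i \<subset> C" "C \<subset> t ! i"
  shows False
  using assms unfolding segment_def tightly_contains_def by blast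

lemma segment_antimono:
  assumes t: "segment E t" and "i \<le> j" "j < length t"
  shows "t ! j \<subseteq> t ! i"
  using assms(2,3)
proof (induction j rule: dec_induct)
  case (step j)
  then have "tightly_contains E (t ! j) (t ! Suc j)"
    using t unfolding segment_def by blast
  with step show ?case
    unfolding tightly_contains_def by auto
qed simp

lemma segment_subset_hd:
  assumes t: "segment E t" and "X \<in> set t"
  shows "X \<subseteq> hd t"
proof -
  obtain k where "k < length t" "X = t ! k"
    using \<open>X \<in> set t\<close> by (auto simp: in_set_conv_nth)
  then show ?thesis
    using segment_antimono[OF t, of 0 k] segment_nonempty[OF t] by (simp add: hd_conv_nth)
qed

lemma segment_last_subset:
  assumes t: "segment E t" and "X \<in> set t"
  shows "last t \<subseteq> X"
proof -
  obtain k where "k < length t" "X = t ! k"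
    using \<open>X \<in> set t\<close> by (auto simp: in_set_conv_nth)
  then show ?thesis
    using segment_antimono[OF t, of k "length t - 1"] segment_nonempty[OF t]
    by (simp add: last_conv_nth)
qed

lemma segment_no_gap:
  assumes t: "segment E t" and C: "C \<in> halfspaces E" "C \<notin> set t"
    and comparable: "\<And>X. X \<in> set t \<Longrightarrow> X \<subseteq> C \<or> C \<subseteq> X"
    and "last t \<subset> C" "C \<subset> hd t"
  shows False
proof -
  have ne: "t \<noteq> []"
    using t by (rule segment_nonempty)
  have "C \<subset> t ! i" if "i < length t" for i
    using that
  proof (induction i)
    case 0
    then show ?case using \<open>C \<subset> hd t\<close> ne by (simp add: hd_conv_nth)
  next
    case (Suc i)
    then have "t ! Suc i \<in> set t" "C \<subset> t ! i"
      by auto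
    then show ?case
      using comparable[of "t ! Suc i"] segment_tight[OF t Suc.prems C(1)] C(2) by blast
  qed
  then have "C \<subset> last t"
    using ne by (simp add: last_conv_nth)
  then show False
    using \<open>last t \<subset> C\<close> by auto
qed

lemma segment_crossing:
  assumes t: "segment E t" and "A \<in> set t" "m \<in> A" "B \<in> set t" "m \<notin> B"
  shows "\<exists>i. Suc i < length t \<and> m \<in> t ! i \<and> m \<notin> t ! Suc i"
proof -
  have ne: "t \<noteq> []"
    using t by (rule segment_nonempty)
  have "m \<in> t ! 0" "m \<notin> t ! (length t - 1)"
    using segment_subset_hd[OF t] segment_last_subset[OF t] assms(2-5) ne
    by (auto simp: hd_conv_nth last_conv_nth)
  then obtain i where "i < length t - 1" "m \<in> t ! i" "m \<notin> t ! Suc i"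
    using nat_discrete_ivt[of "\<lambda>i. m \<notin> t ! i" "length t - 1"] by blast
  then show ?thesis
    by (intro exI[of _ i]) auto
qed

lemma nonoverlapping_segments_not_interleaved:
  assumes "segment E t" "segment E u"
    and comparable: "\<And>X Y. X \<in> set t \<Longrightarrow> Y \<in> set u \<Longrightarrow> X \<noteq> Y \<and> (X \<subseteq> Y \<or> Y \<subseteq> X)"
    and "last u \<subset> hd t" "last t \<subset> hd u"
  shows False
proof -
  have gap: False
    if s: "segment E s" "segment E s'"
      and cmp: "\<And>X Y. X \<in> set s \<Longrightarrow> Y \<in> set s' \<Longrightarrow> X \<noteq> Y \<and> (X \<subseteq> Y \<or> Y \<subseteq> X)"
      and "last s \<subset> last s'" "last s' \<subset> hd s" for s s'
  proof -
    have last: "last s' \<in> set s'"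
      using segment_nonempty[OF s(2)] by simp
    then have "last s' \<in> halfspaces E"
      using s(2) unfolding segment_def by blast
    moreover have "last s' \<notin> set s"
      using cmp last by blast
    moreover have "X \<subseteq> last s' \<or> last s' \<subseteq> X" if "X \<in> set s" for X
      using cmp[OF that last] by blast
    ultimately show False
      using segment_no_gap[OF s(1)] that(4,5) by blast
  qed
  have "last t \<in> set t" "last u \<in> set u"
    using segment_nonempty[OF assms(1)] segment_nonempty[OF assms(2)] by simp_all
  then have "last t \<noteq> last u" "last t \<subseteq> last u \<or> last u \<subseteq> last t"
    using comparable by blast+
  then consider "last t \<subset> last u" | "last u \<subset> last t"
    by blast
  then show False
  proof cases
    case 1
    then show False
      using gap[OF assms(1,2) comparable] \<open>last u \<subset> hd t\<close> by blast
  next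
    case 2
    have "X \<noteq> Y \<and> (X \<subseteq> Y \<or> Y \<subseteq> X)" if "X \<in> set u" "Y \<in> set t" for X Y
      using comparable[OF that(2,1)] by blast
    then show False
      using gap[OF assms(2,1)] 2 \<open>last t \<subset> hd u\<close> by blast
  qed
qed

lemma nonoverlapping_segments_not_both_crossing:
  assumes "segment E t" "segment E u" "\<not> overlap t u"
    and "set t \<subseteq> sep E a b" "set u \<subseteq> sep E a b"
    and "Suc i < length t" "m \<in> t ! i" "m \<notin> t ! Suc i"
    and "Suc j < length u" "m \<in> u ! j" "m \<notin> u ! Suc j"
  shows False
proof -
  have one_way: False
    if s: "segment E s" "segment E s'" "\<not> overlap s s'"
      and sep: "set s \<subseteq> sep E a b" "set s' \<subseteq> sep E a b"
      and k: "Suc k < length s" "m \<in> s ! k"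
      and l: "Suc l < length s'" "m \<notin> s' ! Suc l"
      and below: "s ! k \<subseteq> s' ! l" for s s' k l
  proof -
    have mem: "s ! k \<in> set s" "s' ! l \<in> set s'" "s' ! Suc l \<in> set s'"
      using k l by auto
    have "s ! k \<noteq> s' ! l"
      using not_overlapD(1)[OF s(3) mem(1,2)] .
    then have "s ! k \<subset> s' ! l"
      using below by blast
    moreover have "s ! k \<in> sep E a b" "s' ! Suc l \<in> sep E a b"
      using mem sep by auto
    then have "s ! k \<subseteq> s' ! Suc l \<or> s' ! Suc l \<subseteq> s ! k"
      by (rule sep_nested_comparable[OF not_overlapD(2)[OF s(3) mem(1,3)]])
    then have "s' ! Suc l \<subset> s ! k"
      using not_overlapD(1)[OF s(3) mem(1,3)] k(2) l(2) by blast
    moreover have "s ! k \<in> halfspaces E"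
      using \<open>s ! k \<in> sep E a b\<close> by (simp add: sep_def)
    ultimately show False
      using segment_tight[OF s(2) l(1)] by blast
  qed
  have mem: "t ! i \<in> set t" "u ! j \<in> set u"
    using assms(6,9) by auto
  then have "t ! i \<in> sep E a b" "u ! j \<in> sep E a b"
    using assms(4,5) by auto
  then have "t ! i \<subseteq> u ! j \<or> u ! j \<subseteq> t ! i"
    by (rule sep_nested_comparable[OF not_overlapD(2)[OF assms(3) mem]])
  moreover have "\<not> overlap u t"
    using assms(3) overlap_sym by blast
  ultimately show False
    using one_way[OF assms(1-5,6,7,9,11)] one_way[OF assms(2,1) _ assms(5,4,9,10,6,8)] by blast
qed

lemma rev_segment_rev_segment [simp]: "rev_segment (rev_segment t) = t"
  by (simp add: rev_segment_def rev_map[symmetric])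

lemma set_rev_segment: "set (rev_segment t) = uminus ` set t"
  by (simp add: rev_segment_def)

lemma inj_rev_segment: "inj rev_segment"
  by (metis injI rev_segment_rev_segment)

lemma overlap_rev_segment: "overlap (rev_segment t) (rev_segment u) \<Longrightarrow> overlap t u"
  unfolding overlap_def set_rev_segment transverse_def using nested_Compl by fastforce

lemma sep_Compl: "H \<in> sep E x y \<Longrightarrow> - H \<in> sep E y x"
  by (simp add: sep_def halfspace_Compl)

lemma sep_interval_nested_subset:
  assumes m: "m \<in> interval E a b" and X: "X \<in> sep E a m" and Y: "Y \<in> sep E m b"
    and "nested X Y"
  shows "Y \<subseteq> X"
proof -
  have "b \<in> X"
    using sep_interval_left[OF m X] by (simp add: sep_def)
  moreover have "a \<notin> Y"
    using sep_interval_right[OF m Y] by (simp add: sep_def)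
  ultimately show ?thesis
    using X Y \<open>nested X Y\<close> unfolding sep_def nested_def by blast
qed

lemma stacked_segments_not_overlap:
  assumes p: "segment E p" "set p \<subseteq> sep E a m" and q: "segment E q" "set q \<subseteq> sep E m b"
    and "hd q \<subseteq> last p"
  shows "\<not> overlap p q"
proof -
  have "Y \<subseteq> X" "X \<noteq> Y" if "X \<in> set p" "Y \<in> set q" for X Y
  proof -
    show "Y \<subseteq> X"
      using segment_subset_hd[OF q(1) that(2)] \<open>hd q \<subseteq> last p\<close> segment_last_subset[OF p(1) that(1)]
      by (rule subset_trans[OF subset_trans])
    have "m \<in> X" "m \<notin> Y"
      using that p(2) q(2) by (auto simp: sep_def)
    then show "X \<noteq> Y"
      by blast
  qed
  then show ?thesis
    unfolding overlap_def transverse_def nested_def by blast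
qed

section \<open>Counting copies of a segment\<close>

locale cube_complex_action = cube_complex E for E :: "'v \<Rightarrow> 'v \<Rightarrow> bool" +
  fixes G :: "('g, 'b) monoid_scheme" (structure) and act :: "'g \<Rightarrow> 'v \<Rightarrow> 'v"
  assumes action: "aut_action G E act"

sublocale cube_complex_action \<subseteq> group G
  using action by (simp add: aut_action_def)

context cube_complex_action
begin

lemma act_bij: "g \<in> carrier G \<Longrightarrow> bij (act g)"
  using action unfolding aut_action_def by blast

lemma act_inj: "g \<in> carrier G \<Longrightarrow> inj (act g)"
  using act_bij bij_is_inj by blast

lemma act_edge_iff: "g \<in> carrier G \<Longrightarrow> E (act g x) (act g y) \<longleftrightarrow> E x y"
  using action unfolding aut_action_def by blast

lemma act_one: "act \<one> = id"
  using action unfolding aut_action_def by blast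

lemma act_mult: "g \<in> carrier G \<Longrightarrow> h \<in> carrier G \<Longrightarrow> act (g \<otimes> h) = act g \<circ> act h"
  using action unfolding aut_action_def by blast

lemma act_inv_act: "g \<in> carrier G \<Longrightarrow> act (inv g) (act g x) = x"
  using act_mult[of "inv g" g] by (simp add: act_one fun_eq_iff)

lemma act_act_inv: "g \<in> carrier G \<Longrightarrow> act g (act (inv g) x) = x"
  using act_mult[of g "inv g"] by (simp add: act_one fun_eq_iff)

lemma image_act_Compl: "g \<in> carrier G \<Longrightarrow> act g ` (- H) = - (act g ` H)"
  using act_bij bij_image_Compl_eq by blast

lemma walk_act: "g \<in> carrier G \<Longrightarrow> walk E p \<Longrightarrow> walk E (map (act g) p)"
  by (simp add: walk_def act_edge_iff)

lemma gdist_act_le: "g \<in> carrier G \<Longrightarrow> gdist E (act g x) (act g y) \<le> gdist E x y"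
  using geodesic_exists[of x y] walk_act
  by (metis gdist_le_walk hd_map last_map length_map list.map_disc_iff walk_def)

lemma gdist_act: "g \<in> carrier G \<Longrightarrow> gdist E (act g x) (act g y) = gdist E x y"
  using gdist_act_le[of g x y] gdist_act_le[of "inv g" "act g x" "act g y"]
  by (simp add: act_inv_act)

lemma interval_act: "g \<in> carrier G \<Longrightarrow> z \<in> interval E x y \<Longrightarrow> act g z \<in> interval E (act g x) (act g y)"
  by (simp add: interval_def gdist_act)

lemma gconvex_act:
  assumes g: "g \<in> carrier G" and C: "gconvex E C"
  shows "gconvex E (act g ` C)"
  unfolding gconvex_def
proof (intro ballI subsetI)
  fix u v w
  assume "u \<in> act g ` C" "v \<in> act g ` C" "w \<in> interval E u v"
  then obtain u' v' where "u' \<in> C" "v' \<in> C" "u = act g u'" "v = act g v'"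
    "w \<in> interval E (act g u') (act g v')"
    by blast
  then have "act (inv g) w \<in> interval E u' v'"
    using interval_act[of "inv g"] g by (metis act_inv_act inv_closed)
  then have "act (inv g) w \<in> C"
    using C \<open>u' \<in> C\<close> \<open>v' \<in> C\<close> unfolding gconvex_def by blast
  then show "w \<in> act g ` C"
    using g act_act_inv by (metis image_eqI)
qed

lemma halfspace_act:
  assumes g: "g \<in> carrier G" and H: "H \<in> halfspaces E"
  shows "act g ` H \<in> halfspaces E"
proof -
  have "act g ` H \<noteq> UNIV"
    using H image_act_Compl[OF g, of H] by (auto simp: halfspaces_def)
  moreover have "gconvex E (- (act g ` H))"
    using H gconvex_act[OF g, of "- H"] image_act_Compl[OF g, of H] by (simp add: halfspaces_def)
  ultimately show ?thesis
    using H gconvex_act[OF g, of H] by (simp add: halfspaces_def)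
qed

lemma tightly_contains_act:
  assumes g: "g \<in> carrier G" and AB: "tightly_contains E A B"
  shows "tightly_contains E (act g ` A) (act g ` B)"
proof -
  have inj: "inj (act g)"
    using g by (rule act_inj)
  have psubset_iff: "act g ` X \<subset> act g ` Y \<longleftrightarrow> X \<subset> Y" for X Y
    unfolding psubset_eq inj_image_subset_iff[OF inj] inj_image_eq_iff[OF inj] ..
  have no_between: "\<not> (B \<subset> C \<and> C \<subset> A)" if "C \<in> halfspaces E" for C
    using AB that unfolding tightly_contains_def by metis
  have "\<not> (act g ` B \<subset> C \<and> C \<subset> act g ` A)" if C: "C \<in> halfspaces E" for C
  proof -
    have "act g ` (act (inv g) ` C) = C"
      using g by (simp add: image_comp act_act_inv)
    moreover have "act (inv g) ` C \<in> halfspaces E"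
      using g C by (intro halfspace_act) simp_all
    ultimately show ?thesis
      using no_between psubset_iff by metis
  qed
  moreover have "act g ` B \<subset> act g ` A"
    using AB psubset_iff[of B A] unfolding tightly_contains_def by simp
  ultimately show ?thesis
    unfolding tightly_contains_def by metis
qed

lemma segment_copy:
  assumes g: "g \<in> carrier G" and s: "segment E s"
  shows "segment E (copy act g s)"
  using s halfspace_act[OF g] tightly_contains_act[OF g]
  unfolding segment_def copy_def by auto

lemma copy_mult: "g \<in> carrier G \<Longrightarrow> h \<in> carrier G \<Longrightarrow> copy act g (copy act h s) = copy act (g \<otimes> h) s"
  by (simp add: copy_def act_mult image_comp)

lemma sep_act: "g \<in> carrier G \<Longrightarrow> H \<in> sep E x y \<Longrightarrow> act g ` H \<in> sep E (act g x) (act g y)"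
  unfolding sep_def using halfspace_act inj_image_mem_iff[OF act_inj] by auto

lemma nested_act:
  assumes g: "g \<in> carrier G" and "nested A B"
  shows "nested (act g ` A) (act g ` B)"
  using assms(2) unfolding nested_def image_act_Compl[OF g, symmetric] by (metis image_mono)

lemma overlap_copy_act:
  assumes g: "g \<in> carrier G" and "overlap (copy act g t) (copy act g u)"
  shows "overlap t u"
proof -
  obtain A B where AB: "A \<in> set t" "B \<in> set u"
    and "act g ` A = act g ` B \<or> transverse (act g ` A) (act g ` B)"
    using assms(2) unfolding overlap_def copy_def by auto
  then have "A = B \<or> transverse A B"
    unfolding transverse_def using nested_act[OF g] inj_image_eq_iff[OF act_inj[OF g]] by metis
  then show ?thesis
    unfolding overlap_def using AB by auto
qed

definition copy_packing :: "'v set list \<Rightarrow> 'v \<Rightarrow> 'v \<Rightarrow> 'v set list set \<Rightarrow> bool" where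
  "copy_packing s x y S \<longleftrightarrow> S \<subseteq> {copy act h s | h. h \<in> carrier G} \<and>
      (\<forall>t\<in>S. set t \<subseteq> sep E x y) \<and>
      (\<forall>t\<in>S. \<forall>u\<in>S. t \<noteq> u \<longrightarrow> \<not> overlap t u)"

lemma cnt_eq_Max_copy_packing: "cnt G E act s x y = Max {card S | S. copy_packing s x y S}"
  unfolding cnt_def copy_packing_def ..

lemma copy_packing_subset: "copy_packing s x y S \<Longrightarrow> R \<subseteq> S \<Longrightarrow> copy_packing s x y R"
  unfolding copy_packing_def by blast

lemma copy_packing_comparable:
  assumes S: "copy_packing s x y S" and "t \<in> S" "u \<in> S" "t \<noteq> u" "X \<in> set t" "Y \<in> set u"
  shows "X \<noteq> Y" and "X \<subseteq> Y \<or> Y \<subseteq> X"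
proof -
  have "\<not> overlap t u" "X \<in> sep E x y" "Y \<in> sep E x y"
    using assms unfolding copy_packing_def by auto
  then show "X \<noteq> Y" "X \<subseteq> Y \<or> Y \<subseteq> X"
    using not_overlapD[OF _ assms(5,6)] sep_nested_comparable[of X Y E x y] by simp_all
qed

lemma copy_packing_card_le:
  assumes s: "s \<noteq> []" and S: "copy_packing s x y S"
  shows "finite S" and "card S \<le> card (sep E x y)"
proof -
  have ne: "t \<noteq> []" if "t \<in> S" for t
    using S that s unfolding copy_packing_def copy_def by auto
  have "inj_on hd S"
  proof (rule inj_onI)
    fix t u assume tu: "t \<in> S" "u \<in> S" "hd t = hd u"
    then have "overlap t u"
      unfolding overlap_def using hd_in_set ne by metis
    then show "t = u"
      using S tu unfolding copy_packing_def by blast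
  qed
  moreover have "hd ` S \<subseteq> sep E x y"
    using S ne unfolding copy_packing_def by (auto dest!: hd_in_set)
  ultimately show "finite S" "card S \<le> card (sep E x y)"
    using finite_sep finite_subset card_mono card_image finite_imageD by metis+
qed

lemma card_le_cnt: "s \<noteq> [] \<Longrightarrow> copy_packing s x y S \<Longrightarrow> card S \<le> cnt G E act s x y"
  unfolding cnt_eq_Max_copy_packing
  by (rule Max_ge, rule finite_subset[of _ "{..card (sep E x y)}"])
    (auto dest: copy_packing_card_le)

lemma cnt_attained: "s \<noteq> [] \<Longrightarrow> \<exists>S. copy_packing s x y S \<and> card S = cnt G E act s x y"
proof -
  assume s: "s \<noteq> []"
  let ?K = "{card S | S. copy_packing s x y S}"
  have "finite ?K"
    by (rule finite_subset[of _ "{..card (sep E x y)}"]) (auto dest: copy_packing_card_le[OF s])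
  moreover have "copy_packing s x y {}"
    unfolding copy_packing_def by simp
  then have "?K \<noteq> {}"
    by blast
  ultimately have "Max ?K \<in> ?K"
    by (rule Max_in)
  then show ?thesis
    unfolding cnt_eq_Max_copy_packing by auto
qed

lemma cnt_le_transfer:
  assumes s: "s \<noteq> []" and s': "s' \<noteq> []" and inj: "inj f"
    and copies: "\<And>h. h \<in> carrier G \<Longrightarrow> \<exists>h'\<in>carrier G. f (copy act h s) = copy act h' s'"
    and sep: "\<And>t. set t \<subseteq> sep E x y \<Longrightarrow> set (f t) \<subseteq> sep E x' y'"
    and overlap: "\<And>t u. overlap (f t) (f u) \<Longrightarrow> overlap t u"
  shows "cnt G E act s x y \<le> cnt G E act s' x' y'"
proof -
  obtain S where S: "copy_packing s x y S" "card S = cnt G E act s x y"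
    using cnt_attained[OF s] by blast
  have "copy_packing s' x' y' (f ` S)"
    unfolding copy_packing_def
  proof (intro conjI ballI impI)
    show "f ` S \<subseteq> {copy act h s' | h. h \<in> carrier G}"
    proof
      fix t' assume "t' \<in> f ` S"
      then obtain t h where "t' = f t" "h \<in> carrier G" "t = copy act h s"
        using S(1) unfolding copy_packing_def by blast
      then show "t' \<in> {copy act h s' | h. h \<in> carrier G}"
        using copies by auto
    qed
  next
    fix t' assume "t' \<in> f ` S"
    then show "set t' \<subseteq> sep E x' y'"
      using S(1) sep unfolding copy_packing_def by auto
  next
    fix t' u' assume "t' \<in> f ` S" "u' \<in> f ` S" "t' \<noteq> u'"
    then show "\<not> overlap t' u'"
      using S(1) overlap unfolding copy_packing_def by fastforce
  qed
  then have "card (f ` S) \<le> cnt G E act s' x' y'"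
    by (rule card_le_cnt[OF s'])
  moreover have "card (f ` S) = card S"
    using inj by (simp add: card_image inj_on_subset)
  ultimately show ?thesis
    using S(2) by simp
qed

lemma copy_rev_segment: "h \<in> carrier G \<Longrightarrow> copy act h (rev_segment s) = rev_segment (copy act h s)"
  by (simp add: copy_def rev_segment_def rev_map image_act_Compl)

lemma cnt_rev_segment:
  assumes s: "s \<noteq> []"
  shows "cnt G E act (rev_segment s) x y = cnt G E act s y x"
proof -
  have s': "rev_segment s \<noteq> []"
    using s by (simp add: rev_segment_def)
  have sep: "set (rev_segment t) \<subseteq> sep E b a" if "set t \<subseteq> sep E a b" for t a b
    using that unfolding set_rev_segment by (auto intro!: sep_Compl)
  have "cnt G E act s y x \<le> cnt G E act (rev_segment s) x y"
    by (rule cnt_le_transfer[OF s s' inj_rev_segment]) (auto simp: copy_rev_segment sep overlap_rev_segment)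
  moreover have "cnt G E act (rev_segment s) x y \<le> cnt G E act s y x"
    by (rule cnt_le_transfer[OF s' s inj_rev_segment]) (auto simp: copy_rev_segment sep overlap_rev_segment)
  ultimately show ?thesis
    by simp
qed

lemma cnt_act_le:
  assumes s: "s \<noteq> []" and g: "g \<in> carrier G"
  shows "cnt G E act s x y \<le> cnt G E act s (act g x) (act g y)"
proof (rule cnt_le_transfer[OF s s])
  show "inj (copy act g)"
    unfolding copy_def using act_inj[OF g] by (simp add: inj_image_eq_iff inj_map_eq_map inj_def)
  show "\<exists>h'\<in>carrier G. copy act g (copy act h s) = copy act h' s" if "h \<in> carrier G" for h
    using g that by (auto simp: copy_mult)
  show "set (copy act g t) \<subseteq> sep E (act g x) (act g y)" if "set t \<subseteq> sep E x y" for t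
    using that sep_act[OF g] unfolding copy_def by auto
qed (rule overlap_copy_act[OF g])

lemma cnt_act:
  assumes s: "s \<noteq> []" and g: "g \<in> carrier G"
  shows "cnt G E act s (act g x) (act g y) = cnt G E act s x y"
  using cnt_act_le[OF s g, of x y] cnt_act_le[OF s inv_closed[OF g], of "act g x" "act g y"]
  by (simp add: act_inv_act g)

lemma omega_eq_cnt_diff:
  "s \<noteq> [] \<Longrightarrow> omega G E act s x y = int (cnt G E act s x y) - int (cnt G E act s y x)"
  unfolding omega_def by (simp add: cnt_rev_segment)

lemma omega_act:
  "s \<noteq> [] \<Longrightarrow> g \<in> carrier G \<Longrightarrow> omega G E act s (act g x) (act g y) = omega G E act s x y"
  by (simp add: omega_eq_cnt_diff cnt_act)

end

section \<open>Non-transverse actions\<close>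

locale nontransverse_segment = cube_complex_action E G act
  for E :: "'v \<Rightarrow> 'v \<Rightarrow> bool" and G :: "('g, 'b) monoid_scheme" (structure) and act +
  fixes \<gamma> :: "'v set list"
  assumes gamma_segment: "segment E \<gamma>" and action_non_transverse: "non_transverse G E act"
begin

definition copies :: "'v set list set" where
  "copies = {copy act h \<gamma> | h. h \<in> carrier G}"

lemma copy_packing_copies: "copy_packing \<gamma> x y S \<Longrightarrow> S \<subseteq> copies"
  unfolding copy_packing_def copies_def by blast

lemma copies_segment: "t \<in> copies \<Longrightarrow> segment E t"
  unfolding copies_def using segment_copy[OF _ gamma_segment] by blast

lemma gamma_nonempty: "\<gamma> \<noteq> []"
  using gamma_segment by (rule segment_nonempty)

lemma translates_nested:
  assumes h: "h \<in> carrier G" and k: "k \<in> carrier G" and X: "X \<in> halfspaces E"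
  shows "nested (act h ` X) (act k ` X)"
proof -
  have "act (k \<otimes> inv h) ` (act h ` X) = act k ` X"
    using h k by (simp add: act_mult image_comp act_inv_act)
  moreover have "\<not> transverse (act h ` X) (act (k \<otimes> inv h) ` (act h ` X))"
    using action_non_transverse halfspace_act[OF h X] h k unfolding non_transverse_def by simp
  ultimately show ?thesis
    unfolding transverse_def by simp
qed

lemma hd_copies_nested:
  assumes "t \<in> copies" "u \<in> copies"
  shows "nested (hd t) (hd u)"
proof -
  obtain h k where "h \<in> carrier G" "k \<in> carrier G" "t = copy act h \<gamma>" "u = copy act k \<gamma>"
    using assms unfolding copies_def by blast
  moreover have "hd \<gamma> \<in> halfspaces E"
    using gamma_segment gamma_nonempty unfolding segment_def by auto
  ultimately show ?thesis
    using translates_nested gamma_nonempty by (simp add: copy_def hd_map)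
qed

lemma cnt_le_split:
  assumes m: "m \<in> interval E a b"
  shows "cnt G E act \<gamma> a b \<le> cnt G E act \<gamma> a m + cnt G E act \<gamma> m b + 1"
proof -
  obtain S where S: "copy_packing \<gamma> a b S" "card S = cnt G E act \<gamma> a b"
    using cnt_attained[OF gamma_nonempty] by blast
  have finite: "finite S"
    using copy_packing_card_le(1)[OF gamma_nonempty S(1)] .
  have S_sep: "set t \<subseteq> sep E a b" and S_segment: "segment E t" if "t \<in> S" for t
    using S(1) that copy_packing_copies copies_segment unfolding copy_packing_def by blast+
  define S1 where "S1 = {t \<in> S. set t \<subseteq> sep E a m}"
  define S2 where "S2 = {t \<in> S. set t \<subseteq> sep E m b}"
  define S3 where "S3 = S - S1 - S2"
  have sides: "card S1 \<le> cnt G E act \<gamma> a m" "card S2 \<le> cnt G E act \<gamma> m b"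
    using S(1) by (auto intro!: card_le_cnt[OF gamma_nonempty] simp: S1_def S2_def copy_packing_def)
  have crossing: "\<exists>i. Suc i < length t \<and> m \<in> t ! i \<and> m \<notin> t ! Suc i" if t: "t \<in> S3" for t
  proof -
    obtain A B where "A \<in> set t" "A \<notin> sep E m b" "B \<in> set t" "B \<notin> sep E a m"
      using t unfolding S3_def S1_def S2_def by blast
    moreover have "A \<in> sep E a b" "B \<in> sep E a b"
      using calculation t S_sep unfolding S3_def by auto
    ultimately show ?thesis
      using segment_crossing[OF S_segment] t unfolding S3_def by (auto simp: sep_def)
  qed
  have "\<forall>t\<in>S3. \<forall>u\<in>S3. t = u"
  proof (intro ballI, rule ccontr)
    fix t u assume tu: "t \<in> S3" "u \<in> S3" "t \<noteq> u"
    then have "\<not> overlap t u" "t \<in> S" "u \<in> S"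
      using S(1) unfolding S3_def copy_packing_def by auto
    then show False
      using crossing[OF tu(1)] crossing[OF tu(2)] S_sep S_segment
        nonoverlapping_segments_not_both_crossing by metis
  qed
  moreover have "finite S3"
    using finite by (simp add: S3_def)
  ultimately have "card S3 \<le> 1"
    by (simp add: card_le_Suc0_iff_eq)
  moreover have "S = S1 \<union> S2 \<union> S3"
    unfolding S1_def S2_def S3_def by blast
  then have "card S \<le> card S1 + card S2 + card S3"
    using card_Un_le[of "S1 \<union> S2" S3] card_Un_le[of S1 S2] by (metis add_le_mono1 order_trans)
  ultimately show ?thesis
    using S(2) sides by linarith
qed

lemma hd_copy_subset_hd:
  assumes m: "m \<in> interval E a b" and "p \<in> copies" "q \<in> copies"
    and "set p \<subseteq> sep E a m" "set q \<subseteq> sep E m b"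
  shows "hd q \<subseteq> hd p"
proof -
  have "hd p \<in> set p" "hd q \<in> set q"
    using segment_nonempty[OF copies_segment[OF assms(2)]] segment_nonempty[OF copies_segment[OF assms(3)]]
    by simp_all
  then show ?thesis
    using assms(4,5) by (intro sep_interval_nested_subset[OF m] hd_copies_nested[OF assms(2,3)]) auto
qed

text \<open>By non-transversality both copies of \<open>P\<close> start above \<open>hd q\<close>, so their ends would
  interleave, which the tightness of segments forbids.\<close>

lemma copy_packing_blocked_once:
  assumes m: "m \<in> interval E a b" and P: "copy_packing \<gamma> a m P"
    and p: "p \<in> P" "p' \<in> P" "p \<noteq> p'"
    and q: "q \<in> copies" "set q \<subseteq> sep E m b"
    and "\<not> hd q \<subseteq> last p" "\<not> hd q \<subseteq> last p'"
  shows False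
proof -
  have copies: "p \<in> copies" "p' \<in> copies" and sep: "set p \<subseteq> sep E a m" "set p' \<subseteq> sep E a m"
    using P p copy_packing_copies unfolding copy_packing_def by auto
  have segments: "segment E p" "segment E p'"
    using copies by (auto intro: copies_segment)
  have mem: "hd p \<in> set p" "last p \<in> set p" "hd p' \<in> set p'" "last p' \<in> set p'"
    using segment_nonempty[OF segments(1)] segment_nonempty[OF segments(2)] by simp_all
  have comparable: "X \<noteq> Y \<and> (X \<subseteq> Y \<or> Y \<subseteq> X)" if "X \<in> set p" "Y \<in> set p'" for X Y
    using copy_packing_comparable[OF P p that] by blast
  have "hd q \<subseteq> hd p" "hd q \<subseteq> hd p'"
    using hd_copy_subset_hd[OF m _ q(1) _ q(2)] copies sep by auto
  moreover have "last p' \<noteq> hd p" "last p' \<subseteq> hd p \<or> hd p \<subseteq> last p'"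
    using comparable[OF mem(1,4)] by auto
  moreover have "last p \<noteq> hd p'" "last p \<subseteq> hd p' \<or> hd p' \<subseteq> last p"
    using comparable[OF mem(2,3)] by auto
  ultimately have "last p' \<subset> hd p" "last p \<subset> hd p'"
    using \<open>\<not> hd q \<subseteq> last p\<close> \<open>\<not> hd q \<subseteq> last p'\<close> by (meson psubsetI subset_trans)+
  then show False
    using nonoverlapping_segments_not_interleaved[OF segments comparable] by simp
qed

lemma copy_packing_stacked_union:
  assumes m: "m \<in> interval E a b" and P: "copy_packing \<gamma> a m P" and Q: "copy_packing \<gamma> m b Q"
    and stacked: "\<And>p q. p \<in> P \<Longrightarrow> q \<in> Q \<Longrightarrow> hd q \<subseteq> last p"
  shows "copy_packing \<gamma> a b (P \<union> Q)"
proof -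
  have PQ: "P \<subseteq> copies" "Q \<subseteq> copies"
    using P Q by (auto dest: copy_packing_copies)
  have sep: "\<forall>t\<in>P. set t \<subseteq> sep E a m" "\<forall>t\<in>Q. set t \<subseteq> sep E m b"
    using P Q unfolding copy_packing_def by auto
  have cross: "\<not> overlap p q" if "p \<in> P" "q \<in> Q" for p q
  proof (rule stacked_segments_not_overlap)
    show "segment E p" "segment E q"
      using that PQ copies_segment by auto
    show "set p \<subseteq> sep E a m" "set q \<subseteq> sep E m b" "hd q \<subseteq> last p"
      using that sep stacked by auto
  qed
  have within: "\<not> overlap t u" if "copy_packing \<gamma> x y S" "t \<in> S" "u \<in> S" "t \<noteq> u" for x y S t u
    using that unfolding copy_packing_def by blast
  have "\<not> overlap t u" if "t \<in> P \<union> Q" "u \<in> P \<union> Q" "t \<noteq> u" for t u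
    using that within[OF P] within[OF Q] cross cross[THEN contrapos_nn, OF _ _ overlap_sym]
    by (metis UnE)
  moreover have "set t \<subseteq> sep E a b" if "t \<in> P \<union> Q" for t
    using that sep sep_interval_left[OF m] sep_interval_right[OF m] by fastforce
  ultimately show ?thesis
    using P Q unfolding copy_packing_def by auto
qed

lemma copy_packing_stacked_after_dropping_one:
  assumes m: "m \<in> interval E a b" and P: "copy_packing \<gamma> a m P" and Q: "copy_packing \<gamma> m b Q"
  obtains P' where "P' \<subseteq> P" "card P \<le> card P' + 1" "\<And>p q. p \<in> P' \<Longrightarrow> q \<in> Q \<Longrightarrow> hd q \<subseteq> last p"
proof (cases "\<exists>p\<in>P. \<exists>q\<in>Q. \<not> hd q \<subseteq> last p")
  case False
  then show thesis
    using that[of P] by auto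
next
  case True
  then obtain p0 q0 where p0: "p0 \<in> P" "q0 \<in> Q" "\<not> hd q0 \<subseteq> last p0"
    by blast
  have Q_copies: "q \<in> copies" "set q \<subseteq> sep E m b" if "q \<in> Q" for q
    using that Q copy_packing_copies unfolding copy_packing_def by auto
  have blocked: False if "p1 \<in> P" "p2 \<in> P" "p1 \<noteq> p2" "q \<in> Q"
    "\<not> hd q \<subseteq> last p1" "\<not> hd q \<subseteq> last p2" for p1 p2 q
    using copy_packing_blocked_once[OF m P that(1-3) Q_copies[OF that(4)] that(5,6)] .
  have "hd q \<subseteq> last p" if p: "p \<in> P - {p0}" and q: "q \<in> Q" for p q
  proof (rule ccontr)
    assume bad: "\<not> hd q \<subseteq> last p"
    have "hd q \<subseteq> last p0" "hd q0 \<subseteq> last p"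
      using blocked[of p p0 q] blocked[of p0 p q0] p q p0 bad by auto
    moreover have "last p \<subseteq> last p0 \<or> last p0 \<subseteq> last p"
      using copy_packing_comparable(2)[OF P] p p0 copy_packing_copies[OF P]
        copies_segment segment_nonempty by (metis DiffE insertCI last_in_set subset_iff)
    ultimately show False
      using bad p0(3) by blast
  qed
  moreover have "card P \<le> card (P - {p0}) + 1"
    using copy_packing_card_le(1)[OF gamma_nonempty P] p0(1) by (simp add: card_Diff_singleton)
  ultimately show thesis
    using that[of "P - {p0}"] by blast
qed

lemma cnt_split_le:
  assumes m: "m \<in> interval E a b"
  shows "cnt G E act \<gamma> a m + cnt G E act \<gamma> m b \<le> cnt G E act \<gamma> a b + 1"
proof -
  obtain P where P: "copy_packing \<gamma> a m P" "card P = cnt G E act \<gamma> a m"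
    using cnt_attained[OF gamma_nonempty] by blast
  obtain Q where Q: "copy_packing \<gamma> m b Q" "card Q = cnt G E act \<gamma> m b"
    using cnt_attained[OF gamma_nonempty] by blast
  obtain P' where P': "P' \<subseteq> P" "card P \<le> card P' + 1" "\<And>p q. p \<in> P' \<Longrightarrow> q \<in> Q \<Longrightarrow> hd q \<subseteq> last p"
    using copy_packing_stacked_after_dropping_one[OF m P(1) Q(1)] by blast
  have "P' \<inter> Q = {}"
  proof (rule ccontr)
    assume "P' \<inter> Q \<noteq> {}"
    then obtain t where "t \<in> P" "t \<in> Q" "hd t \<in> set t"
      using P'(1) Q(1) copy_packing_copies copies_segment segment_nonempty
      by (metis IntE all_not_in_conv list.set_sel(1) subsetD)
    then show False
      using P(1) Q(1) unfolding copy_packing_def sep_def by blast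
  qed
  then have "card (P' \<union> Q) = card P' + card Q"
    using copy_packing_card_le(1)[OF gamma_nonempty] P(1) Q(1) P'(1)
    by (intro card_Un_disjoint) (auto intro: finite_subset)
  moreover have "card (P' \<union> Q) \<le> cnt G E act \<gamma> a b"
    using copy_packing_stacked_union[OF m copy_packing_subset[OF P(1) P'(1)] Q(1) P'(3)]
    by (rule card_le_cnt[OF gamma_nonempty])
  ultimately show ?thesis
    using P(2) Q(2) P'(2) by linarith
qed

lemma cnt_split:
  assumes "m \<in> interval E a b"
  shows "\<bar>int (cnt G E act \<gamma> a b) - int (cnt G E act \<gamma> a m) - int (cnt G E act \<gamma> m b)\<bar> \<le> 1"
  using cnt_le_split[OF assms] cnt_split_le[OF assms] by linarith

lemma omega_triangle: "\<bar>omega G E act \<gamma> x z - omega G E act \<gamma> x y - omega G E act \<gamma> y z\<bar> \<le> 6"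
proof -
  obtain m where "m \<in> interval E x y" "m \<in> interval E y z" "m \<in> interval E x z"
    using median_exists by blast
  then have "m \<in> interval E x y" "m \<in> interval E y x" "m \<in> interval E y z"
    "m \<in> interval E z y" "m \<in> interval E x z" "m \<in> interval E z x"
    by (simp_all add: interval_sym)
  then show ?thesis
    using cnt_split unfolding omega_eq_cnt_diff[OF gamma_nonempty] by (smt (verit))
qed

lemma omega_orbit_quasimorphism:
  "antisymmetric_quasimorphism G (\<lambda>g. real_of_int (omega G E act \<gamma> x0 (act g x0))) 6"
proof
  fix g h assume g: "g \<in> carrier G" and h: "h \<in> carrier G"
  have "omega G E act \<gamma> x0 (act h x0) = omega G E act \<gamma> (act g x0) (act g (act h x0))"
    using omega_act[OF gamma_nonempty g] by simp
  then show "\<bar>real_of_int (omega G E act \<gamma> x0 (act (g \<otimes> h) x0))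
      - real_of_int (omega G E act \<gamma> x0 (act g x0)) - real_of_int (omega G E act \<gamma> x0 (act h x0))\<bar> \<le> 6"
    using omega_triangle[of x0 "act g (act h x0)" "act g x0"] g h by (simp add: act_mult)
next
  fix g assume g: "g \<in> carrier G"
  have "omega G E act \<gamma> x0 (act (inv g) x0) = omega G E act \<gamma> (act g x0) x0"
    using omega_act[OF gamma_nonempty g, of x0 "act (inv g) x0"] g by (simp add: act_act_inv)
  then show "real_of_int (omega G E act \<gamma> x0 (act (inv g) x0)) = - real_of_int (omega G E act \<gamma> x0 (act g x0))"
    by (simp add: omega_eq_cnt_diff[OF gamma_nonempty])
qed

end

theorem lemma4p8:
  fixes G :: "('g, 'b) monoid_scheme" and E :: "'v \<Rightarrow> 'v \<Rightarrow> bool"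
    and act :: "'g \<Rightarrow> 'v \<Rightarrow> 'v" and \<gamma> :: "'v set list" and x0 :: 'v
  assumes "median_graph E"
    and "aut_action G E act"
    and "non_transverse G E act"
    and "segment E \<gamma>"
  defines "\<phi> \<equiv> (\<lambda>g. real_of_int (omega G E act \<gamma> x0 (act g x0)))"
  shows "(\<forall>g\<in>carrier G. \<forall>h\<in>carrier G. \<bar>\<phi> (g \<otimes>\<^bsub>G\<^esub> h) - \<phi> g - \<phi> h\<bar> \<le> 6)
    \<and> (\<forall>g\<in>carrier G. convergent (\<lambda>n::nat. \<phi> (g [^]\<^bsub>G\<^esub> n) / real n))
    \<and> (let \<psi> = (\<lambda>g. lim (\<lambda>n::nat. \<phi> (g [^]\<^bsub>G\<^esub> n) / real n)) in
        (\<forall>g\<in>carrier G. \<forall>h\<in>carrier G. \<bar>\<psi> (g \<otimes>\<^bsub>G\<^esub> h) - \<psi> g - \<psi> h\<bar> \<le> 12)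
      \<and> (\<forall>g\<in>carrier G. \<forall>n::int. \<psi> (g [^]\<^bsub>G\<^esub> n) = real_of_int n * \<psi> g))"
proof -
  interpret nontransverse_segment E G act \<gamma>
    using assms(1-4) by unfold_locales
  interpret \<phi>: antisymmetric_quasimorphism G \<phi> 6
    unfolding \<phi>_def by (rule omega_orbit_quasimorphism)
  show ?thesis
    unfolding Let_def \<phi>.homogenization_def[symmetric]
    using \<phi>.defect \<phi>.homogenization_LIMSEQ \<phi>.homogenization_defect \<phi>.homogenization_pow_int
    by (auto simp: convergent_def)
qed

end
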